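(* Let $w>0$ be a smooth $1$-periodic function with $\int_0^1 w(x)\,dx=1$, and let $Q(y)=y\ln y-y+1$. Then $$\int_0^1 Q(w)\,dx\le \Bigl(\int_0^1 \frac{w_x^2}{w}\,dx\Bigr)^{1/2}.$$ *)

theory Defs
  imports "HOL-Analysis.Analysis"
begin

definition smooth_real :: "(real \<Rightarrow> real) \<Rightarrow> bool" where
  "smooth_real f \<longleftrightarrow> (\<exists>D :: nat \<Rightarrow> real \<Rightarrow> real. D 0 = f \<and>
      (\<forall>k x. (D k has_real_derivative D (Suc k) x) (at x)))"

definition Qfun :: "real \<Rightarrow> real" where
  "Qfun y = y * ln y - y + 1"

end

theory Submission
  imports Defs
begin

text \<open>Since the mean of \<open>w\<close> is 1, some point \<open>y\<close> has \<open>w y \<le> 1\<close>. With \<open>h = sqrt w\<close>, for every \<open>x\<close>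
  \<open>ln (w x) = 2 ln (h x) \<le> 2 (h x - h y) \<le> 2 \<integral>\<bar>h'\<bar> \<le> 2 sqrt (\<integral>h'\<^sup>2) = sqrt (\<integral>w'\<^sup>2/w) =: S\<close>
  by \<open>ln t \<le> t - 1\<close>, the fundamental theorem of calculus and Cauchy-Schwarz. Hence \<open>Q(w) \<le> (S - 1) w + 1\<close>
  pointwise, and integrating against the unit mass gives the bound.\<close>

lemma smooth_real_has_real_derivative:
  assumes "smooth_real f"
  shows "(f has_real_derivative deriv f x) (at x)"
proof -
  obtain D where "D 0 = f" and "\<And>k x. (D k has_real_derivative D (Suc k) x) (at x)"
    using assms unfolding smooth_real_def by blast
  then show ?thesis by (metis DERIV_imp_deriv)
qed

lemma smooth_real_continuous_deriv:
  assumes "smooth_real f"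
  shows "continuous_on UNIV (deriv f)"
proof -
  obtain D where D0: "D 0 = f" and D: "\<And>k x. (D k has_real_derivative D (Suc k) x) (at x)"
    using assms unfolding smooth_real_def by blast
  have "deriv f x = D 1 x" for x
    using D[of 0 x] unfolding D0 One_nat_def by (rule DERIV_imp_deriv)
  then have "deriv f = D 1" ..
  then show ?thesis
    using D[of 1] by (metis DERIV_isCont continuous_at_imp_continuous_on)
qed

lemma integral_abs_le_sqrt_integral_square:
  fixes f :: "real \<Rightarrow> real"
  assumes "continuous_on {a..b} f" and "a \<le> b"
  shows "integral {a..b} (\<lambda>x. \<bar>f x\<bar>) \<le> sqrt ((b - a) * integral {a..b} (\<lambda>x. (f x)\<^sup>2))"
proof (cases "a = b")
  case True
  then show ?thesis by simp
next
  case False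
  define A where "A = integral {a..b} (\<lambda>x. \<bar>f x\<bar>)"
  define J where "J = integral {a..b} (\<lambda>x. (f x)\<^sup>2)"
  define L where "L = b - a"
  define s where "s = A / L"
  have L: "L > 0" using assms(2) False unfolding L_def by simp
  have A: "((\<lambda>x. \<bar>f x\<bar>) has_integral A) {a..b}"
    unfolding A_def by (intro integrable_integral integrable_continuous_real continuous_intros assms(1))
  have J: "((\<lambda>x. (f x)\<^sup>2) has_integral J) {a..b}"
    unfolding J_def by (intro integrable_integral integrable_continuous_real continuous_intros assms(1))
  have const: "((\<lambda>x. s\<^sup>2) has_integral s\<^sup>2 * L) {a..b}"
    using has_integral_const_real[of "s\<^sup>2" a b] assms(2) unfolding L_def by (simp add: mult.commute)
  have "((\<lambda>x. (f x)\<^sup>2 - 2 * s * \<bar>f x\<bar> + s\<^sup>2) has_integral J - 2 * s * A + s\<^sup>2 * L) {a..b}"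
    by (intro has_integral_add has_integral_diff has_integral_mult_right J A const)
  moreover have "0 \<le> (f x)\<^sup>2 - 2 * s * \<bar>f x\<bar> + s\<^sup>2" for x
    using zero_le_power2[of "\<bar>f x\<bar> - s"] by (simp add: power2_diff mult_ac)
  ultimately have "0 \<le> J - 2 * s * A + s\<^sup>2 * L"
    by (rule has_integral_nonneg)
  then have "A\<^sup>2 \<le> L * J"
    using L unfolding s_def by (simp add: field_simps power2_eq_square)
  then show ?thesis
    unfolding A_def J_def L_def by (rule real_le_rsqrt)
qed

lemma abs_diff_le_integral_abs_derivative:
  fixes f f' :: "real \<Rightarrow> real"
  assumes deriv: "\<And>t. t \<in> {a..b} \<Longrightarrow> (f has_real_derivative f' t) (at t)"
    and cont: "continuous_on {a..b} f'"
    and x: "x \<in> {a..b}" and y: "y \<in> {a..b}"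
  shows "\<bar>f x - f y\<bar> \<le> integral {a..b} (\<lambda>t. \<bar>f' t\<bar>)"
proof -
  have ordered: "\<bar>f v - f u\<bar> \<le> integral {a..b} (\<lambda>t. \<bar>f' t\<bar>)" if uv: "a \<le> u" "u \<le> v" "v \<le> b" for u v
  proof -
    have sub: "{u..v} \<subseteq> {a..b}" using uv by auto
    have int_abs: "(\<lambda>t. \<bar>f' t\<bar>) integrable_on {c..d}" if "{c..d} \<subseteq> {a..b}" for c d
      using that by (intro integrable_continuous_real continuous_intros continuous_on_subset[OF cont])
    have "(f' has_integral f v - f u) {u..v}"
      using uv sub
      by (intro fundamental_theorem_of_calculus)
        (auto simp: has_real_derivative_iff_has_vector_derivative[symmetric]
          intro!: has_field_derivative_at_within deriv)
    then have "\<bar>f v - f u\<bar> = norm (integral {u..v} f')"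
      by (simp add: integral_unique)
    also have "\<dots> \<le> integral {u..v} (\<lambda>t. \<bar>f' t\<bar>)"
      using sub
      by (intro integral_norm_bound_integral int_abs integrable_continuous_real
          continuous_on_subset[OF cont]) auto
    also have "\<dots> \<le> integral {a..b} (\<lambda>t. \<bar>f' t\<bar>)"
      using sub by (intro integral_subset_le int_abs) auto
    finally show ?thesis .
  qed
  then show ?thesis
    using ordered[of y x] ordered[of x y] x y by (cases "y \<le> x") (auto simp: abs_minus_commute)
qed

lemma exists_le_integral_mean:
  fixes f :: "real \<Rightarrow> real"
  assumes "continuous_on {a..b} f" and "a \<le> b"
  obtains y where "y \<in> {a..b}" and "(b - a) * f y \<le> integral {a..b} f"
proof -
  obtain y where y: "y \<in> {a..b}" and min: "\<And>x. x \<in> {a..b} \<Longrightarrow> f y \<le> f x"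
    using continuous_attains_inf[OF compact_Icc _ assms(1)] assms(2) by auto
  have "integral {a..b} (\<lambda>x. f y) \<le> integral {a..b} f"
    using min by (intro integral_le integrable_continuous_real assms(1) continuous_on_const) auto
  then show ?thesis
    using that y assms(2) by (simp add: mult.commute)
qed

lemma ln_le_sqrt_integral_Fisher_information:
  fixes w w' :: "real \<Rightarrow> real"
  assumes deriv: "\<And>t. t \<in> {a..b} \<Longrightarrow> (w has_real_derivative w' t) (at t)"
    and cont: "continuous_on {a..b} w'"
    and pos: "\<And>t. t \<in> {a..b} \<Longrightarrow> w t > 0"
    and y: "y \<in> {a..b}" "w y \<le> 1"
    and x: "x \<in> {a..b}"
  shows "ln (w x) \<le> sqrt ((b - a) * integral {a..b} (\<lambda>t. (w' t)\<^sup>2 / w t))"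
proof -
  define h' where "h' t = w' t / (2 * sqrt (w t))" for t
  have deriv_h: "((\<lambda>t. sqrt (w t)) has_real_derivative h' t) (at t)" if "t \<in> {a..b}" for t
    using DERIV_chain2[OF DERIV_real_sqrt[OF pos[OF that]] deriv[OF that]]
    unfolding h'_def by (simp add: field_simps)
  have "continuous_on {a..b} w"
    by (rule DERIV_continuous_on, rule has_field_derivative_at_within, rule deriv)
  then have cont_h': "continuous_on {a..b} h'"
    unfolding h'_def using pos by (intro continuous_intros cont) force+
  have h'_square: "(h' t)\<^sup>2 = (w' t)\<^sup>2 / w t / 4" if "t \<in> {a..b}" for t
    using pos[OF that] unfolding h'_def by (simp add: power_divide power_mult_distrib)
  have "ln (w x) = 2 * ln (sqrt (w x))"
    using pos[OF x] by (simp add: ln_sqrt)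
  also have "\<dots> \<le> 2 * (sqrt (w x) - 1)"
    using pos[OF x] by (intro mult_left_mono ln_le_minus_one) simp_all
  also have "\<dots> \<le> 2 * (sqrt (w x) - sqrt (w y))"
    using y(2) by simp
  also have "\<dots> \<le> 2 * integral {a..b} (\<lambda>t. \<bar>h' t\<bar>)"
    using abs_diff_le_integral_abs_derivative[OF deriv_h cont_h' x y(1)] by simp
  also have "\<dots> \<le> 2 * sqrt ((b - a) * integral {a..b} (\<lambda>t. (h' t)\<^sup>2))"
    using integral_abs_le_sqrt_integral_square[OF cont_h'] x by simp
  also have "integral {a..b} (\<lambda>t. (h' t)\<^sup>2) = integral {a..b} (\<lambda>t. (w' t)\<^sup>2 / w t / 4)"
    by (rule Henstock_Kurzweil_Integration.integral_cong) (rule h'_square)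
  also have "2 * sqrt ((b - a) * integral {a..b} (\<lambda>t. (w' t)\<^sup>2 / w t / 4))
      = sqrt ((b - a) * integral {a..b} (\<lambda>t. (w' t)\<^sup>2 / w t))"
    unfolding integral_divide by (simp add: real_sqrt_mult real_sqrt_divide)
  finally show ?thesis .
qed

lemma integral_Qfun_le:
  fixes w :: "real \<Rightarrow> real"
  assumes cont: "continuous_on {a..b} w"
    and pos: "\<And>x. x \<in> {a..b} \<Longrightarrow> w x > 0"
    and bound: "\<And>x. x \<in> {a..b} \<Longrightarrow> ln (w x) \<le> S"
    and "a \<le> b"
  shows "integral {a..b} (\<lambda>x. Qfun (w x)) \<le> (S - 1) * integral {a..b} w + (b - a)"
proof -
  have "Qfun (w x) \<le> (S - 1) * w x + 1" if "x \<in> {a..b}" for x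
    using mult_left_mono[OF bound[OF that] less_imp_le[OF pos[OF that]]]
    unfolding Qfun_def by (simp add: algebra_simps)
  then have "integral {a..b} (\<lambda>x. Qfun (w x)) \<le> integral {a..b} (\<lambda>x. (S - 1) * w x + 1)"
    unfolding Qfun_def using pos
    by (intro integral_le integrable_continuous_real continuous_intros cont) force+
  also have "\<dots> = (S - 1) * integral {a..b} w + (b - a)"
    using has_integral_const_real[of "1::real" a b] \<open>a \<le> b\<close>
    by (intro integral_unique has_integral_add has_integral_mult_right integrable_integral
        integrable_continuous_real cont) simp
  finally show ?thesis .
qed

theorem lemma3p2:
  fixes w :: "real \<Rightarrow> real"
  assumes smooth: "smooth_real w"
    and periodic: "\<And>x. w (x + 1) = w x"
    and pos: "\<And>x. w x > 0"
    and mass: "integral {0..1} w = 1"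
  shows "integral {0..1} (\<lambda>x. Qfun (w x))
           \<le> sqrt (integral {0..1} (\<lambda>x. (deriv w x)\<^sup>2 / w x))"
proof -
  note deriv = smooth_real_has_real_derivative[OF smooth]
  have cont: "continuous_on {0..1} w"
    by (rule DERIV_continuous_on, rule has_field_derivative_at_within, rule deriv)
  obtain y where y: "y \<in> {0..1}" "w y \<le> 1"
    using exists_le_integral_mean[OF cont] mass by auto
  have "ln (w x) \<le> sqrt (integral {0..1} (\<lambda>t. (deriv w t)\<^sup>2 / w t))" if "x \<in> {0..1}" for x
    using ln_le_sqrt_integral_Fisher_information[OF deriv _ pos y that]
      continuous_on_subset[OF smooth_real_continuous_deriv[OF smooth]] by simp
  from integral_Qfun_le[OF cont pos this] show ?thesis
    using mass by simp
qed

end
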